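(* Let $\gamma>0$, $A:=K+\gamma M$ and $A^{\rm aux}:=G^TAJ^{\rm grad}_{\varepsilon,\bm\beta}$ (a node-to-node grid operator). Then $A^{\rm aux}=\gamma L^{\rm grad}$, where $L^{\rm grad}$ is the node operator (the SAFE stencil for the scalar $H(\mathrm{grad})$ convection–diffusion problem) $$6(L^{\rm grad}f)_{\bm n}=4(\sigma_1+\sigma_2)f_{\bm n}+(\sigma_2-4B(-b_1))f_{\bm n+e_1}+(\sigma_2-4B(b_1))f_{\bm n-e_1}+(\sigma_1-4B(-b_2))f_{\bm n+e_2}+(\sigma_1-4B(b_2))f_{\bm n-e_2}$$ $$\quad-(B(-b_1)+B(-b_2))f_{\bm n+(1,1)}-(B(b_1)+B(-b_2))f_{\bm n+(-1,1)}-(B(-b_1)+B(b_2))f_{\bm n+(1,-1)}-(B(b_1)+B(b_2))f_{\bm n+(-1,-1)},$$ with $B=B_\varepsilon$. Equivalently, for every $\bm\theta\in\mathbb{R}^2$, $A^{\rm aux}\varphi(\bm\theta)_N=\gamma\cdot\tfrac23 D(\bm\theta)\varphi(\bm\theta)_N$ with $$D(\bm\theta)=(2+\tilde c_2)s_1^2\sigma_1+(2+\tilde c_1)s_2^2\sigma_2-\tfrac{i}{2}\tilde s_1b_1(2+\tilde c_2)-\tfrac{i}{2}\tilde s_2b_2(2+\tilde c_1),$$ and $\tfrac23D(\bm\theta)$ is also the Fourier symbol of $L^{\rm grad}$.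
   Context: Fix constants $\varepsilon>0$, $\bm{\beta}=(\beta_1,\beta_2)\in\mathbb{R}^2$, $h>0$, and set $b_j:=\beta_j h$. The Bernoulli function is $B_\varepsilon(s):=\varepsilon\big/\int_0^1 e^{sx/\varepsilon}\,dx$. Write $\sigma_j:=B_\varepsilon(b_j)+B_\varepsilon(-b_j)$, $s_j=\sin(\theta_j/2)$, $\tilde s_j=\sin\theta_j$, $\tilde c_j=\cos\theta_j$. Index sets: nodes $N=\mathbb{Z}^2$, horizontal edges $E_1=(\mathbb{Z}+\frac12)\times\mathbb{Z}$, vertical edges $E_2=\mathbb{Z}\times(\mathbb{Z}+\frac12)$, $E=E_1\cup E_2$; grid functions are complex-valued functions on these sets; $e_1=(1,0)$, $e_2=(0,1)$. $J^{\rm grad}_{\varepsilon,\bm\beta}$: $(J^{\rm grad}_{\varepsilon,\bm\beta}f)_{\bm k}=-B_\varepsilon(b_j)f_{\bm k-e_j/2}+B_\varepsilon(-b_j)f_{\bm k+e_j/2}$ for $\bm k\in E_j$. $G^T$ maps edge functions to node functions by $(G^Tg)_{\bm n}=\sum_{j=1}^2\big(g_{\bm n-e_j/2}-g_{\bm n+e_j/2}\big)$. The edge operator $K$ is defined, writing $B=B_\varepsilon$, by: for $\bm k\in E_1$, $h^2(Kf)_{\bm k}=\sigma_2f_{\bm k}-B(-b_2)f_{\bm k+e_2}-B(b_2)f_{\bm k-e_2}-B(b_1)f_{\bm k+(-\frac12,\frac12)}+B(-b_1)f_{\bm k+(\frac12,\frac12)}+B(b_1)f_{\bm k+(-\frac12,-\frac12)}-B(-b_1)f_{\bm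 k+(\frac12,-\frac12)}$; for $\bm k\in E_2$, $h^2(Kf)_{\bm k}=\sigma_1f_{\bm k}-B(b_1)f_{\bm k-e_1}-B(-b_1)f_{\bm k+e_1}-B(-b_2)f_{\bm k+(-\frac12,\frac12)}+B(-b_2)f_{\bm k+(\frac12,\frac12)}+B(b_2)f_{\bm k+(-\frac12,-\frac12)}-B(b_2)f_{\bm k+(\frac12,-\frac12)}$. The edge mass operator $M$: $(Mf)_{\bm k}=\frac23f_{\bm k}+\frac16(f_{\bm k+e_2}+f_{\bm k-e_2})$ for $\bm k\in E_1$, and $(Mf)_{\bm k}=\frac23f_{\bm k}+\frac16(f_{\bm k+e_1}+f_{\bm k-e_1})$ for $\bm k\in E_2$. Fourier modes: $\varphi(\bm\theta)_N(\bm k):=e^{i\bm\theta\cdot\bm k}$ for $\bm k\in N$. *)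

theory Defs
  imports "HOL-Analysis.Analysis"
begin

text \<open>Grid functions are complex-valued functions of points of the plane
  (coordinates as real pairs); only their values on the relevant index sets
  (nodes Z^2, horizontal edges (Z+1/2) x Z, vertical edges Z x (Z+1/2)) matter.\<close>

type_synonym gridfun = "real \<times> real \<Rightarrow> complex"

definition Bern :: "real \<Rightarrow> real \<Rightarrow> real" where
  "Bern \<epsilon> s = \<epsilon> / integral {0..1} (\<lambda>x. exp (s * x / \<epsilon>))"

definition isNode :: "real \<times> real \<Rightarrow> bool" where
  "isNode p \<longleftrightarrow> fst p \<in> \<int> \<and> snd p \<in> \<int>"

definition isE1 :: "real \<times> real \<Rightarrow> bool" where
  "isE1 p \<longleftrightarrow> fst p - 1/2 \<in> \<int> \<and> snd p \<in> \<int>"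

definition isE2 :: "real \<times> real \<Rightarrow> bool" where
  "isE2 p \<longleftrightarrow> fst p \<in> \<int> \<and> snd p - 1/2 \<in> \<int>"

definition sh :: "real \<times> real \<Rightarrow> real \<Rightarrow> real \<Rightarrow> real \<times> real" where
  "sh k dx dy = (fst k + dx, snd k + dy)"

definition b1 :: "real \<times> real \<Rightarrow> real \<Rightarrow> real" where "b1 \<beta> h = fst \<beta> * h"
definition b2 :: "real \<times> real \<Rightarrow> real \<Rightarrow> real" where "b2 \<beta> h = snd \<beta> * h"

definition sig :: "real \<Rightarrow> real \<Rightarrow> real" where
  "sig \<epsilon> b = Bern \<epsilon> b + Bern \<epsilon> (- b)"

definition Jgrad :: "real \<Rightarrow> real \<times> real \<Rightarrow> real \<Rightarrow> gridfun \<Rightarrow> gridfun" where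
  "Jgrad \<epsilon> \<beta> h f k =
    (if isE1 k then - complex_of_real (Bern \<epsilon> (b1 \<beta> h)) * f (sh k (-1/2) 0) + complex_of_real (Bern \<epsilon> (- b1 \<beta> h)) * f (sh k (1/2) 0)
     else if isE2 k then - complex_of_real (Bern \<epsilon> (b2 \<beta> h)) * f (sh k 0 (-1/2)) + complex_of_real (Bern \<epsilon> (- b2 \<beta> h)) * f (sh k 0 (1/2))
     else 0)"

definition GT :: "gridfun \<Rightarrow> gridfun" where
  "GT g n = (g (sh n (-1/2) 0) - g (sh n (1/2) 0)) + (g (sh n 0 (-1/2)) - g (sh n 0 (1/2)))"

definition Kop :: "real \<Rightarrow> real \<times> real \<Rightarrow> real \<Rightarrow> gridfun \<Rightarrow> gridfun" where
  "Kop \<epsilon> \<beta> h f k =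
    (let B = (\<lambda>s. complex_of_real (Bern \<epsilon> s)); c1 = b1 \<beta> h; c2 = b2 \<beta> h in
     (if isE1 k then
        (complex_of_real (sig \<epsilon> c2) * f k - B (-c2) * f (sh k 0 1) - B c2 * f (sh k 0 (-1))
         - B c1 * f (sh k (-1/2) (1/2)) + B (-c1) * f (sh k (1/2) (1/2))
         + B c1 * f (sh k (-1/2) (-1/2)) - B (-c1) * f (sh k (1/2) (-1/2))) / complex_of_real (h^2)
      else if isE2 k then
        (complex_of_real (sig \<epsilon> c1) * f k - B c1 * f (sh k (-1) 0) - B (-c1) * f (sh k 1 0)
         - B (-c2) * f (sh k (-1/2) (1/2)) + B (-c2) * f (sh k (1/2) (1/2))
         + B c2 * f (sh k (-1/2) (-1/2)) - B c2 * f (sh k (1/2) (-1/2))) / complex_of_real (h^2)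
      else 0))"

definition Mop :: "gridfun \<Rightarrow> gridfun" where
  "Mop f k =
    (if isE1 k then 2/3 * f k + 1/6 * (f (sh k 0 1) + f (sh k 0 (-1)))
     else if isE2 k then 2/3 * f k + 1/6 * (f (sh k 1 0) + f (sh k (-1) 0))
     else 0)"

definition Aop :: "real \<Rightarrow> real \<times> real \<Rightarrow> real \<Rightarrow> real \<Rightarrow> gridfun \<Rightarrow> gridfun" where
  "Aop \<epsilon> \<beta> h \<gamma> f k = Kop \<epsilon> \<beta> h f k + complex_of_real \<gamma> * Mop f k"

definition Aaux :: "real \<Rightarrow> real \<times> real \<Rightarrow> real \<Rightarrow> real \<Rightarrow> gridfun \<Rightarrow> gridfun" where
  "Aaux \<epsilon> \<beta> h \<gamma> f = GT (Aop \<epsilon> \<beta> h \<gamma> (Jgrad \<epsilon> \<beta> h f))"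

definition Lgrad :: "real \<Rightarrow> real \<times> real \<Rightarrow> real \<Rightarrow> gridfun \<Rightarrow> gridfun" where
  "Lgrad \<epsilon> \<beta> h f n =
    (let B = (\<lambda>s. complex_of_real (Bern \<epsilon> s)); c1 = b1 \<beta> h; c2 = b2 \<beta> h;
         s1 = complex_of_real (sig \<epsilon> c1); s2 = complex_of_real (sig \<epsilon> c2) in
     (4 * (s1 + s2) * f n
      + (s2 - 4 * B (-c1)) * f (sh n 1 0) + (s2 - 4 * B c1) * f (sh n (-1) 0)
      + (s1 - 4 * B (-c2)) * f (sh n 0 1) + (s1 - 4 * B c2) * f (sh n 0 (-1))
      - (B (-c1) + B (-c2)) * f (sh n 1 1) - (B c1 + B (-c2)) * f (sh n (-1) 1)
      - (B (-c1) + B c2) * f (sh n 1 (-1)) - (B c1 + B c2) * f (sh n (-1) (-1))) / 6)"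

definition phiN :: "real \<times> real \<Rightarrow> gridfun" where
  "phiN \<theta> k = exp (\<i> * complex_of_real (fst \<theta> * fst k + snd \<theta> * snd k))"

definition Dsym :: "real \<Rightarrow> real \<times> real \<Rightarrow> real \<Rightarrow> real \<times> real \<Rightarrow> complex" where
  "Dsym \<epsilon> \<beta> h \<theta> =
    (let t1 = fst \<theta>; t2 = snd \<theta>; c1 = b1 \<beta> h; c2 = b2 \<beta> h;
         sa = sin (t1/2); sb = sin (t2/2) in
     complex_of_real ((2 + cos t2) * sa^2 * sig \<epsilon> c1 + (2 + cos t1) * sb^2 * sig \<epsilon> c2)
     - \<i> / 2 * complex_of_real (sin t1 * c1 * (2 + cos t2))
     - \<i> / 2 * complex_of_real (sin t2 * c2 * (2 + cos t1)))"

end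

theory Submission
  imports Defs
begin

text \<open>\<open>K\<close> is a discrete curl-curl operator, so \<open>G^T K\<close> annihilates every discrete gradient
  \<open>J^grad f\<close>, identically in the Bernoulli weights. Only the mass term of \<open>A\<close> survives, and
  \<open>G^T M J^grad\<close> expands to the SAFE stencil \<open>L^grad\<close>. Its Fourier symbol follows from
  \<open>B(-s) = B(s) + s\<close>, which turns the antisymmetric part of each pair of weights into the
  convection term \<open>b_j\<close>.\<close>

lemma integral_exp_mult_01:
  fixes t :: real
  assumes "t \<noteq> 0"
  shows "integral {0..1} (\<lambda>x. exp (t * x)) = (exp t - 1) / t"
proof -
  have "((\<lambda>x. exp (t * x)) has_integral (exp (t * 1) / t - exp (t * 0) / t)) {0..1}"
    using assms
    by (intro fundamental_theorem_of_calculus)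
       (auto intro!: derivative_eq_intros
             simp flip: has_real_derivative_iff_has_vector_derivative)
  then show ?thesis
    by (simp add: integral_unique diff_divide_distrib)
qed

lemma Bern_uminus:
  assumes "\<epsilon> > 0"
  shows "Bern \<epsilon> (- s) = Bern \<epsilon> s + s"
proof (cases "s = 0")
  case True
  then show ?thesis by simp
next
  case False
  define t where "t = s / \<epsilon>"
  have "t \<noteq> 0" and "exp t \<noteq> 1" and s: "s = \<epsilon> * t"
    using False assms by (simp_all add: t_def)
  have "Bern \<epsilon> s = \<epsilon> / ((exp t - 1) / t)"
    using integral_exp_mult_01[OF \<open>t \<noteq> 0\<close>] by (simp add: Bern_def t_def)
  also have "\<dots> = s / (exp t - 1)"
    using \<open>exp t \<noteq> 1\<close> by (simp add: s field_simps)
  finally have B_pos: "Bern \<epsilon> s = s / (exp t - 1)" .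
  have "Bern \<epsilon> (- s) = \<epsilon> / ((exp (- t) - 1) / - t)"
    using integral_exp_mult_01[of "- t"] \<open>t \<noteq> 0\<close> by (simp add: Bern_def t_def)
  also have "\<dots> = s * exp t / (exp t - 1)"
    using \<open>exp t \<noteq> 1\<close> by (simp add: s exp_minus field_simps)
  finally have B_neg: "Bern \<epsilon> (- s) = s * exp t / (exp t - 1)" .
  show ?thesis
    unfolding B_pos B_neg using \<open>exp t \<noteq> 1\<close> by (simp add: field_simps)
qed

lemma sh_sh [simp]: "sh (sh k a b) c d = sh k (a + c) (b + d)"
  by (simp add: sh_def)

lemma sh_0_0 [simp]: "sh k 0 0 = k"
  by (simp add: sh_def)

lemma of_int_add_half_notin_Ints: "(of_int k + 1/2 :: real) \<notin> \<int>"
proof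
  assume "(of_int k + 1/2 :: real) \<in> \<int>"
  then obtain m where "(of_int m :: real) = of_int k + 1/2"
    by (auto elim: Ints_cases)
  then have "(of_int (2 * m) :: real) = of_int (2 * k + 1)"
    by simp
  then have "2 * m = 2 * k + 1"
    by (simp only: of_int_eq_iff)
  then show False
    by presburger
qed

lemma half_integers_notin_Ints [simp]:
  "(1/2 :: real) \<notin> \<int>" "- (1/2 :: real) \<notin> \<int>" "(3/2 :: real) \<notin> \<int>" "- (3/2 :: real) \<notin> \<int>"
  using of_int_add_half_notin_Ints[of 0] of_int_add_half_notin_Ints[of "-1"]
    of_int_add_half_notin_Ints[of 1] of_int_add_half_notin_Ints[of "-2"]
  by simp_all

lemma Ints_add_cancel_left: "(x :: real) \<in> \<int> \<Longrightarrow> x + c \<in> \<int> \<longleftrightarrow> c \<in> \<int>"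
  by (metis Ints_add Ints_diff add_diff_cancel_left')

lemma isE1_sh:
  "isNode n \<Longrightarrow> isE1 (sh n a b) \<longleftrightarrow> a - 1/2 \<in> \<int> \<and> b \<in> \<int>"
  unfolding isNode_def isE1_def sh_def
  by (simp add: Ints_add_cancel_left add_diff_eq[symmetric])

lemma isE2_sh:
  "isNode n \<Longrightarrow> isE2 (sh n a b) \<longleftrightarrow> a \<in> \<int> \<and> b - 1/2 \<in> \<int>"
  unfolding isNode_def isE2_def sh_def
  by (simp add: Ints_add_cancel_left add_diff_eq[symmetric])

lemma GT_Kop_Jgrad_eq_0:
  assumes "isNode n"
  shows "GT (Kop \<epsilon> \<beta> h (Jgrad \<epsilon> \<beta> h f)) n = 0"
  using assms unfolding GT_def Kop_def Jgrad_def Let_def sig_def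
  by (simp add: isE1_sh isE2_sh) (simp add: field_simps)

lemma GT_Mop_Jgrad_eq_Lgrad:
  assumes "isNode n"
  shows "GT (Mop (Jgrad \<epsilon> \<beta> h f)) n = Lgrad \<epsilon> \<beta> h f n"
  using assms unfolding GT_def Mop_def Jgrad_def Lgrad_def Let_def sig_def
  by (simp add: isE1_sh isE2_sh) (simp add: field_simps)

lemma GT_add_mult: "GT (\<lambda>k. f k + c * g k) n = GT f n + c * GT g n"
  unfolding GT_def by (simp add: algebra_simps)

lemma Aaux_eq_Lgrad:
  assumes "isNode n"
  shows "Aaux \<epsilon> \<beta> h \<gamma> f n = complex_of_real \<gamma> * Lgrad \<epsilon> \<beta> h f n"
  unfolding Aaux_def Aop_def GT_add_mult
  using GT_Kop_Jgrad_eq_0[OF assms] GT_Mop_Jgrad_eq_Lgrad[OF assms] by simp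

lemma phiN_sh: "phiN \<theta> (sh n a b) = phiN \<theta> n * (cis (fst \<theta> * a) * cis (snd \<theta> * b))"
  unfolding phiN_def sh_def cis_conv_exp
  by (simp add: exp_add[symmetric] algebra_simps)

lemma sin_half_power2: "sin ((t :: real) / 2) ^ 2 = (1 - cos t) / 2"
  using cos_double_sin[of "t / 2"] by simp

lemma Lgrad_phiN:
  assumes "\<epsilon> > 0"
  shows "Lgrad \<epsilon> \<beta> h (phiN \<theta>) n = 2/3 * Dsym \<epsilon> \<beta> h \<theta> * phiN \<theta> n"
  unfolding Lgrad_def Dsym_def Let_def sig_def phiN_sh
  by (simp add: Bern_uminus[OF assms] sin_half_power2 cis.ctr cos_diff sin_diff complex_eq_iff)
     (simp add: algebra_simps)

theorem theorem4p2:
  fixes \<epsilon> h \<gamma> :: real and \<beta> :: "real \<times> real"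
  assumes "\<epsilon> > 0" and "h > 0" and "\<gamma> > 0"
  shows "(\<forall>f n. isNode n \<longrightarrow> Aaux \<epsilon> \<beta> h \<gamma> f n = complex_of_real \<gamma> * Lgrad \<epsilon> \<beta> h f n)
    \<and> (\<forall>\<theta> n. isNode n \<longrightarrow>
          Aaux \<epsilon> \<beta> h \<gamma> (phiN \<theta>) n = complex_of_real \<gamma> * (2/3 * Dsym \<epsilon> \<beta> h \<theta>) * phiN \<theta> n)
    \<and> (\<forall>\<theta> n. isNode n \<longrightarrow> Lgrad \<epsilon> \<beta> h (phiN \<theta>) n = 2/3 * Dsym \<epsilon> \<beta> h \<theta> * phiN \<theta> n)"
  using Aaux_eq_Lgrad Lgrad_phiN[OF \<open>\<epsilon> > 0\<close>] by (simp add: mult.assoc)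

end
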